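(* Let $\mathbb{A}$ be an epistemic Heyting algebra and let $i$ be an agent. Then $\lozenge_i\mathbb{A}:=\{\lozenge_i a\mid a\in\mathbb{A}\}$ is a Boolean subalgebra of (the Heyting algebra reduct of) $\mathbb{A}$. Furthermore, setting $\Box_i\mathbb{A}:=\{\Box_i a\mid a\in\mathbb{A}\}$, we have $\lozenge_i\mathbb{A}=\Box_i\mathbb{A}$.
   Context: Fix a set $\mathsf{Ag}$ of agents. A monadic Heyting algebra is a Heyting algebra $\mathbb{L}$ together with, for each $i\in\mathsf{Ag}$, monotone unary operations $\lozenge_i,\Box_i$ on $\mathbb{L}$ such that for all $a,b$: $a\leq\lozenge_i a$; $\Box_i a\leq a$; $\lozenge_i(a\vee b)\leq\lozenge_i a\vee\lozenge_i b$; $\Box_i(a\to b)\leq\Box_i a\to\Box_i b$; $\lozenge_i a\leq\Box_i\lozenge_i a$; $\lozenge_i\Box_i a\leq\Box_i a$; $\Box_i(a\to b)\leq\lozenge_i a\to\lozenge_i b$; $\lozenge_i\bot\leq\bot$; $\top\leq\Box_i\top$. An epistemic Heyting algebra is a finite monadic Heyting algebra such that $\lozenge_i a\vee\neg\lozenge_i a=\top$ for every $i\in\mathsf{Ag}$ and every $a$ (where $\neg x:=x\to\bot$). *)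

theory Defs
  imports Main
begin

definition heyting_imp :: "('a::bounded_lattice \<Rightarrow> 'a \<Rightarrow> 'a) \<Rightarrow> bool" where
  "heyting_imp imp \<longleftrightarrow> (\<forall>a b c. c \<le> imp a b \<longleftrightarrow> inf c a \<le> b)"

definition hneg :: "('a::bounded_lattice \<Rightarrow> 'a \<Rightarrow> 'a) \<Rightarrow> 'a \<Rightarrow> 'a" where
  "hneg imp x = imp x bot"

definition monadic_heyting ::
  "('a::bounded_lattice \<Rightarrow> 'a \<Rightarrow> 'a) \<Rightarrow> ('i \<Rightarrow> 'a \<Rightarrow> 'a) \<Rightarrow> ('i \<Rightarrow> 'a \<Rightarrow> 'a) \<Rightarrow> bool" where
  "monadic_heyting imp dia box \<longleftrightarrow> heyting_imp imp \<and>
    (\<forall>i. mono (dia i) \<and> mono (box i) \<and>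
      (\<forall>a b.
         a \<le> dia i a \<and>
         box i a \<le> a \<and>
         dia i (sup a b) \<le> sup (dia i a) (dia i b) \<and>
         box i (imp a b) \<le> imp (box i a) (box i b) \<and>
         dia i a \<le> box i (dia i a) \<and>
         dia i (box i a) \<le> box i a \<and>
         box i (imp a b) \<le> imp (dia i a) (dia i b)) \<and>
      dia i bot \<le> bot \<and>
      top \<le> box i top)"

definition epistemic_heyting ::
  "('a::{bounded_lattice,finite} \<Rightarrow> 'a \<Rightarrow> 'a) \<Rightarrow> ('i \<Rightarrow> 'a \<Rightarrow> 'a) \<Rightarrow> ('i \<Rightarrow> 'a \<Rightarrow> 'a) \<Rightarrow> bool" where
  "epistemic_heyting imp dia box \<longleftrightarrow> monadic_heyting imp dia box \<and>
    (\<forall>i a. sup (dia i a) (hneg imp (dia i a)) = top)"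

definition heyting_subalgebra :: "('a::bounded_lattice \<Rightarrow> 'a \<Rightarrow> 'a) \<Rightarrow> 'a set \<Rightarrow> bool" where
  "heyting_subalgebra imp S \<longleftrightarrow> bot \<in> S \<and> top \<in> S \<and>
    (\<forall>x\<in>S. \<forall>y\<in>S. inf x y \<in> S \<and> sup x y \<in> S \<and> imp x y \<in> S)"

definition boolean_subalgebra :: "('a::bounded_lattice \<Rightarrow> 'a \<Rightarrow> 'a) \<Rightarrow> 'a set \<Rightarrow> bool" where
  "boolean_subalgebra imp S \<longleftrightarrow> heyting_subalgebra imp S \<and>
    (\<forall>x\<in>S. sup x (hneg imp x) = top)"

end

theory Submission
  imports Defs
begin

text \<open>The \<open>\<lozenge>\<^sub>i\<close>-image coincides with the \<open>\<box>\<^sub>i\<close>-image because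
  \<open>\<box>\<^sub>i \<lozenge>\<^sub>i a = \<lozenge>\<^sub>i a\<close> and \<open>\<lozenge>\<^sub>i \<box>\<^sub>i a = \<box>\<^sub>i a\<close>; its elements are exactly the
  \<open>x\<close> with \<open>\<lozenge>\<^sub>i x \<le> x\<close>. This characterisation gives closure under meets and joins
  (monotonicity and join-preservation) and under negation, using
  \<open>x = \<box>\<^sub>i x \<le> \<box>\<^sub>i \<not>\<not>x \<le> \<lozenge>\<^sub>i \<not>x \<rightarrow> \<lozenge>\<^sub>i \<bottom>\<close>. Since every \<open>\<lozenge>\<^sub>i a\<close> is complemented,
  \<open>x \<rightarrow> y = \<not>x \<squnion> y\<close> on the image, which gives closure under implication.\<close>

lemma heyting_imp_residual:
  "heyting_imp imp \<Longrightarrow> c \<le> imp a b \<longleftrightarrow> inf c a \<le> b"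
  unfolding heyting_imp_def by blast

lemma heyting_inf_sup_distrib:
  fixes imp :: "'a::bounded_lattice \<Rightarrow> 'a \<Rightarrow> 'a"
  assumes h: "heyting_imp imp"
  shows "inf (c::'a) (sup a b) \<le> sup (inf c a) (inf c b)"
proof -
  let ?s = "sup (inf c a) (inf c b)"
  have "a \<le> imp c ?s" and "b \<le> imp c ?s"
    using heyting_imp_residual[OF h] by (simp_all add: inf_commute le_supI1 le_supI2)
  then have "sup a b \<le> imp c ?s" by simp
  then show ?thesis using heyting_imp_residual[OF h] by (simp add: inf_commute)
qed

lemma heyting_inf_neg:
  fixes imp :: "'a::bounded_lattice \<Rightarrow> 'a \<Rightarrow> 'a"
  assumes h: "heyting_imp imp"
  shows "inf x (imp x bot) = bot"
  using heyting_imp_residual[OF h, of "imp x bot" x bot] by (simp add: inf_commute bot_unique)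

lemma heyting_le_neg_neg:
  fixes imp :: "'a::bounded_lattice \<Rightarrow> 'a \<Rightarrow> 'a"
  assumes h: "heyting_imp imp"
  shows "x \<le> imp (imp x bot) bot"
  using heyting_imp_residual[OF h] heyting_inf_neg[OF h, of x] by simp

lemma heyting_imp_eq_sup_neg:
  fixes imp :: "'a::bounded_lattice \<Rightarrow> 'a \<Rightarrow> 'a"
  assumes h: "heyting_imp imp" and compl: "sup x (imp x bot) = top"
  shows "imp x y = sup (imp x bot) y"
proof (rule antisym)
  have "imp x y = inf (imp x y) (sup x (imp x bot))" using compl by simp
  also have "\<dots> \<le> sup (inf (imp x y) x) (inf (imp x y) (imp x bot))"
    by (rule heyting_inf_sup_distrib[OF h])
  also have "\<dots> \<le> sup y (imp x bot)"
  proof (rule sup_mono)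
    show "inf (imp x y) x \<le> y" using heyting_imp_residual[OF h] by blast
  qed simp
  finally show "imp x y \<le> sup (imp x bot) y" by (simp add: sup_commute)
next
  have "imp x bot \<le> imp x y"
    using heyting_imp_residual[OF h] heyting_inf_neg[OF h, of x] by (simp add: inf_commute)
  moreover have "y \<le> imp x y" using heyting_imp_residual[OF h] by simp
  ultimately show "sup (imp x bot) y \<le> imp x y" by simp
qed

lemma monadic_heytingD:
  assumes "monadic_heyting imp dia box"
  shows monadic_heyting_imp: "heyting_imp imp"
    and mono_dia: "mono (dia i)"
    and mono_box: "mono (box i)"
    and dia_inflationary: "a \<le> dia i a"
    and box_deflationary: "box i a \<le> a"
    and dia_sup_le: "dia i (sup a b) \<le> sup (dia i a) (dia i b)"
    and dia_le_box_dia: "dia i a \<le> box i (dia i a)"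
    and dia_box_le: "dia i (box i a) \<le> box i a"
    and box_imp_le_imp_dia: "box i (imp a b) \<le> imp (dia i a) (dia i b)"
    and dia_bot: "dia i bot = bot"
  using assms unfolding monadic_heyting_def by (auto simp: bot_unique)

context
  fixes imp :: "'a::bounded_lattice \<Rightarrow> 'a \<Rightarrow> 'a"
    and dia box :: "'i \<Rightarrow> 'a \<Rightarrow> 'a"
  assumes mh: "monadic_heyting imp dia box"
begin

lemma box_dia: "box i (dia i a) = dia i a"
  using box_deflationary[OF mh] dia_le_box_dia[OF mh] by (rule antisym)

lemma dia_box: "dia i (box i a) = box i a"
  using dia_box_le[OF mh] dia_inflationary[OF mh] by (rule antisym)

lemma range_dia_eq_range_box: "range (dia i) = range (box i)"
  by (metis box_dia dia_box image_subsetI rangeI subset_antisym)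

lemma mem_range_dia_iff: "x \<in> range (dia i) \<longleftrightarrow> dia i x \<le> x"
proof
  assume "x \<in> range (dia i)"
  then have "x \<in> range (box i)" by (simp add: range_dia_eq_range_box)
  then show "dia i x \<le> x" using dia_box by auto
next
  assume "dia i x \<le> x"
  then have "dia i x = x" using dia_inflationary[OF mh] by (rule antisym)
  then show "x \<in> range (dia i)" by (metis rangeI)
qed

lemma bot_in_range_dia: "bot \<in> range (dia i)"
  by (simp add: mem_range_dia_iff dia_bot[OF mh])

lemma top_in_range_dia: "top \<in> range (dia i)"
  by (simp add: mem_range_dia_iff)

lemma range_dia_inf_closed:
  assumes "x \<in> range (dia i)" and "y \<in> range (dia i)"
  shows "inf x y \<in> range (dia i)"
proof -
  have "dia i (inf x y) \<le> inf (dia i x) (dia i y)"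
    using mono_dia[OF mh] by (simp add: monoD)
  then show ?thesis using assms by (auto simp: mem_range_dia_iff)
qed

lemma range_dia_sup_closed:
  assumes "x \<in> range (dia i)" and "y \<in> range (dia i)"
  shows "sup x y \<in> range (dia i)"
proof -
  have "dia i (sup x y) \<le> sup (dia i x) (dia i y)" by (rule dia_sup_le[OF mh])
  also have "\<dots> \<le> sup x y" using assms by (intro sup_mono) (simp_all add: mem_range_dia_iff)
  finally show ?thesis by (simp add: mem_range_dia_iff)
qed

lemma range_dia_neg_closed:
  assumes x: "x \<in> range (dia i)"
  shows "imp x bot \<in> range (dia i)"
proof -
  have h: "heyting_imp imp" by (rule monadic_heyting_imp[OF mh])
  have "x = box i x" using x box_dia by auto
  also have "\<dots> \<le> box i (imp (imp x bot) bot)"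
    by (rule monoD[OF mono_box[OF mh] heyting_le_neg_neg[OF h]])
  also have "\<dots> \<le> imp (dia i (imp x bot)) bot"
    using box_imp_le_imp_dia[OF mh, of i "imp x bot" bot] by (simp add: dia_bot[OF mh])
  finally have "inf (dia i (imp x bot)) x \<le> bot"
    using heyting_imp_residual[OF h] by (simp add: inf_commute)
  then have "dia i (imp x bot) \<le> imp x bot" by (simp add: heyting_imp_residual[OF h])
  then show ?thesis by (simp add: mem_range_dia_iff)
qed

end

theorem fact1:
  fixes imp :: "'a::{bounded_lattice,finite} \<Rightarrow> 'a \<Rightarrow> 'a"
    and dia box :: "'i \<Rightarrow> 'a \<Rightarrow> 'a"
    and i :: 'i
  assumes "epistemic_heyting imp dia box"
  shows "boolean_subalgebra imp (range (dia i)) \<and> range (dia i) = range (box i)"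
proof -
  have mh: "monadic_heyting imp dia box"
    and dia_compl: "\<And>a. sup (dia i a) (imp (dia i a) bot) = top"
    using assms unfolding epistemic_heyting_def hneg_def by blast+
  have compl: "sup x (imp x bot) = top" if "x \<in> range (dia i)" for x
    using that dia_compl by blast
  have imp_closed: "imp x y \<in> range (dia i)" if "x \<in> range (dia i)" "y \<in> range (dia i)" for x y
    unfolding heyting_imp_eq_sup_neg[OF monadic_heyting_imp[OF mh] compl[OF that(1)], of y]
    by (rule range_dia_sup_closed[OF mh range_dia_neg_closed[OF mh that(1)] that(2)])
  have "heyting_subalgebra imp (range (dia i))"
    unfolding heyting_subalgebra_def
    by (intro conjI ballI bot_in_range_dia[OF mh] top_in_range_dia[OF mh]
        range_dia_inf_closed[OF mh] range_dia_sup_closed[OF mh] imp_closed)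
  moreover have "\<forall>x\<in>range (dia i). sup x (hneg imp x) = top"
    unfolding hneg_def using compl by blast
  ultimately show ?thesis
    unfolding boolean_subalgebra_def using range_dia_eq_range_box[OF mh] by blast
qed

end
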